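(* Let $n\in\mathbb{N}$ and consider input sequences $X\in\mathbb{R}^{n\times d_{\text{emb}}}$ with entries bounded in absolute value by $M$. Let $\operatorname{SaturatedAttn}(X;\Gamma_s)$ be a causally masked saturated attention head with parameter norm bounded by $O(1)$, producing outputs $o_1,\dots,o_n\in\mathbb{R}^{d_h}$. Suppose that for each row $i$, if $j\in\mathcal{M}_i$ and $k\le i$, $k\notin\mathcal{M}_i$, then $\mathbf{A}_{ij}-\mathbf{A}_{ik}\ge\delta$ for some $\delta>0$. Then for any $\varepsilon>0$ there exists a standard single-head causal softmax attention function $\operatorname{Attn}(X;\Gamma)$ with parameter norms bounded by $\operatorname{poly}(M,1/\delta,\log n,\log(1/\varepsilon))$ whose outputs $\tilde o_1,\dots,\tilde o_n$ satisfy $\|\tilde o_i - o_i\|_\infty\le\varepsilon$ for all $1\le i\le n$.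
   Context: Saturated masked attention with weights $\Gamma_s=(W_Q,W_K,W_V)$: $\mathbf{A} = XW_Q(XW_K)^\top$, $\mathcal{M}_i = \{j\le i\mid \mathbf{A}_{ij}=\max_{k\le i}\mathbf{A}_{ik}\}$, output $\operatorname{SaturatedAttn}(X;\Gamma_s)_i = \frac{1}{|\mathcal{M}_i|}\sum_{j\in\mathcal{M}_i}X_jW_V$. A causal softmax attention head with parameters $(W_Q',W_K',W_V')$ outputs at row $i$ the vector $\sum_{j\le i}\alpha_{ij}X_jW_V'$ with $\alpha_{ij} = \exp(q_i\cdot k_j)/\sum_{k\le i}\exp(q_i\cdot k_k)$, $q_i = X_iW_Q'$, $k_j = X_jW_K'$. *)

theory Defs
  imports "HOL-Analysis.Analysis"
begin

text \<open>Input sequences: rows X 1, ..., X n, each a row vector in R^{d_emb} (index type 'e).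
 Weight matrices W :: real^'k^'e are d_emb x d_k matrices; X_i W is  X i v* W.\<close>

definition attn_score ::
  "(nat \<Rightarrow> real^'e) \<Rightarrow> real^'k^'e \<Rightarrow> real^'k^'e \<Rightarrow> nat \<Rightarrow> nat \<Rightarrow> real" where
  "attn_score X WQ WK i j = (X i v* WQ) \<bullet> (X j v* WK)"

definition max_set ::
  "(nat \<Rightarrow> real^'e) \<Rightarrow> real^'k^'e \<Rightarrow> real^'k^'e \<Rightarrow> nat \<Rightarrow> nat set" where
  "max_set X WQ WK i =
     {j \<in> {1..i}. attn_score X WQ WK i j = Max ((\<lambda>k. attn_score X WQ WK i k) ` {1..i})}"

definition saturated_attn ::
  "(nat \<Rightarrow> real^'e) \<Rightarrow> real^'k^'e \<Rightarrow> real^'k^'e \<Rightarrow> real^'h^'e \<Rightarrow> nat \<Rightarrow> real^'h" where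
  "saturated_attn X WQ WK WV i =
     (1 / real (card (max_set X WQ WK i))) *\<^sub>R (\<Sum>j\<in>max_set X WQ WK i. X j v* WV)"

definition softmax_attn ::
  "(nat \<Rightarrow> real^'e) \<Rightarrow> real^'k^'e \<Rightarrow> real^'k^'e \<Rightarrow> real^'h^'e \<Rightarrow> nat \<Rightarrow> real^'h" where
  "softmax_attn X WQ WK WV i =
     (\<Sum>j\<in>{1..i}. (exp (attn_score X WQ WK i j) /
                     (\<Sum>k\<in>{1..i}. exp (attn_score X WQ WK i k))) *\<^sub>R (X j v* WV))"

definition linf_norm :: "real^'h \<Rightarrow> real" where
  "linf_norm v = Max (range (\<lambda>h. \<bar>v $ h\<bar>))"

end

theory Submission
  imports Defs
begin

text \<open>Scaling the query matrix by c multiplies every attention score by c, i.e. runs softmax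
  at inverse temperature c. If every score outside the maximising set lies at least \<delta> below
  the maximum, the softmax weight outside that set is at most i exp(-c \<delta>), so the softmax
  average of the value vectors is within 2 K i exp(-c \<delta>) of their uniform average over the
  maximising set, K bounding the value vectors. Taking c \<delta> = ln n + ln(1/\<epsilon>) + 2 K makes this
  at most \<epsilon>; since K = O(M), the scale c is quadratic in M, 1/\<delta>, ln n and ln(1/\<epsilon>), while the
  key and value matrices are kept unchanged.\<close>

lemma exp_sum_le_of_gap:
  fixes a :: "'i \<Rightarrow> real"
  assumes "\<forall>k\<in>R. a k \<le> m - \<delta>" and "c \<ge> 0"
  shows "(\<Sum>k\<in>R. exp (c * a k)) \<le> real (card R) * exp (c * m) * exp (- (c * \<delta>))"
proof -
  have "(\<Sum>k\<in>R. exp (c * a k)) \<le> (\<Sum>k\<in>R. exp (c * m) * exp (- (c * \<delta>)))"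
  proof (rule sum_mono)
    fix k assume "k \<in> R"
    then have "c * a k \<le> c * m + - (c * \<delta>)"
      using assms mult_left_mono[of "a k" "m - \<delta>" c] by (simp add: right_diff_distrib)
    then show "exp (c * a k) \<le> exp (c * m) * exp (- (c * \<delta>))"
      by (simp flip: exp_add)
  qed
  then show ?thesis by simp
qed

lemma weighted_average_near_uniform_average:
  fixes p :: "'i \<Rightarrow> real" and v :: "'i \<Rightarrow> 'a::real_normed_vector"
  assumes "finite I" and "S \<subseteq> I" and "S \<noteq> {}"
    and top: "\<forall>j\<in>S. p j = e" and "e > 0" and nonneg: "\<forall>k\<in>I. p k \<ge> 0"
    and bound: "\<forall>j\<in>I. norm (v j) \<le> K"
  shows "norm ((\<Sum>j\<in>I. (p j / (\<Sum>k\<in>I. p k)) *\<^sub>R v j) - (1 / real (card S)) *\<^sub>R (\<Sum>j\<in>S. v j))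
         \<le> 2 * K * (\<Sum>k\<in>I - S. p k) / (\<Sum>k\<in>I. p k)"
proof -
  define ns where "ns = real (card S)"
  define r where "r = (\<Sum>k\<in>I - S. p k)"
  define q where "q = (\<Sum>k\<in>I - S. p k *\<^sub>R v k)"
  define u where "u = (\<Sum>j\<in>S. v j)"
  define Z where "Z = (\<Sum>k\<in>I. p k)"
  have "finite S" using assms(1,2) finite_subset by blast
  then have ns: "ns \<ge> 1" using \<open>S \<noteq> {}\<close> by (simp add: ns_def Suc_le_eq card_gt_0_iff)
  have r: "r \<ge> 0" unfolding r_def using nonneg by (intro sum_nonneg) auto
  have Z_split: "Z = ns * e + r"
    using sum.subset_diff[OF assms(2,1), of p] top by (simp add: Z_def r_def ns_def)
  then have Z: "Z > 0" using ns \<open>e > 0\<close> r by (smt (verit) mult_pos_pos)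
  have "(\<Sum>j\<in>I. (p j / Z) *\<^sub>R v j) = (1 / Z) *\<^sub>R (\<Sum>j\<in>I. p j *\<^sub>R v j)"
    by (simp add: scaleR_sum_right)
  also have "(\<Sum>j\<in>I. p j *\<^sub>R v j) = e *\<^sub>R u + q"
    using sum.subset_diff[OF assms(2,1), of "\<lambda>j. p j *\<^sub>R v j"] top
    by (simp add: q_def u_def scaleR_sum_right)
  finally have average: "(\<Sum>j\<in>I. (p j / Z) *\<^sub>R v j) = (1 / Z) *\<^sub>R (e *\<^sub>R u + q)" .
  have coeff: "e / Z - 1 / ns = - (r / (ns * Z))"
    using ns Z by (simp add: Z_split field_simps)
  have "(1 / Z) *\<^sub>R (e *\<^sub>R u + q) - (1 / ns) *\<^sub>R u = (e / Z - 1 / ns) *\<^sub>R u + (1 / Z) *\<^sub>R q"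
    by (simp add: algebra_simps)
  also have "\<dots> = (1 / (ns * Z)) *\<^sub>R (ns *\<^sub>R q - r *\<^sub>R u)"
    using ns by (simp add: coeff algebra_simps)
  finally have diff: "(1 / Z) *\<^sub>R (e *\<^sub>R u + q) - (1 / ns) *\<^sub>R u
      = (1 / (ns * Z)) *\<^sub>R (ns *\<^sub>R q - r *\<^sub>R u)" .
  have "norm q \<le> (\<Sum>k\<in>I - S. p k * K)"
    unfolding q_def using bound nonneg
    by (intro order_trans[OF norm_sum] sum_mono) (auto intro: mult_left_mono)
  then have q: "norm q \<le> r * K" by (simp add: r_def sum_distrib_right)
  have "norm u \<le> (\<Sum>j\<in>S. K)"
    unfolding u_def using bound assms(2) by (intro order_trans[OF norm_sum] sum_mono) auto
  then have u: "norm u \<le> ns * K" by (simp add: ns_def)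
  define w where "w = ns *\<^sub>R q - r *\<^sub>R u"
  have "norm w \<le> ns * (r * K) + r * (ns * K)"
    unfolding w_def using ns r q u
    by (intro order_trans[OF norm_triangle_ineq4] add_mono) (auto intro: mult_left_mono)
  then have "norm w \<le> ns * (2 * r * K)" by (simp add: algebra_simps)
  then have "norm ((1 / (ns * Z)) *\<^sub>R w) \<le> 2 * K * r / Z"
    using ns Z by (simp add: field_simps)
  then show ?thesis
    unfolding Z_def[symmetric] r_def[symmetric] average u_def[symmetric] ns_def[symmetric] diff
      w_def[symmetric] .
qed

lemma softmax_average_near_uniform_average:
  fixes a :: "'i \<Rightarrow> real" and v :: "'i \<Rightarrow> 'a::real_normed_vector"
  assumes "finite I" and "S \<subseteq> I" and "S \<noteq> {}"
    and top: "\<forall>j\<in>S. a j = m" and gap: "\<forall>k\<in>I - S. a k \<le> m - \<delta>"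
    and bound: "\<forall>j\<in>I. norm (v j) \<le> K" and "c \<ge> 0"
  shows "norm ((\<Sum>j\<in>I. (exp (c * a j) / (\<Sum>k\<in>I. exp (c * a k))) *\<^sub>R v j)
                - (1 / real (card S)) *\<^sub>R (\<Sum>j\<in>S. v j))
         \<le> 2 * K * real (card I) * exp (- (c * \<delta>))"
proof -
  define e where "e = exp (c * m)"
  define r where "r = (\<Sum>k\<in>I - S. exp (c * a k))"
  define Z where "Z = (\<Sum>k\<in>I. exp (c * a k))"
  have "e > 0" and "r \<ge> 0" by (simp_all add: e_def r_def sum_nonneg)
  have K: "K \<ge> 0" using bound assms(2,3) norm_ge_zero order_trans by blast
  obtain j where "j \<in> S" using \<open>S \<noteq> {}\<close> by blast
  then have "e \<le> Z"
    unfolding Z_def e_def using top assms(1,2) by (metis exp_ge_zero member_le_sum subsetD)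
  have "r \<le> real (card (I - S)) * e * exp (- (c * \<delta>))"
    unfolding r_def e_def by (rule exp_sum_le_of_gap[OF gap \<open>c \<ge> 0\<close>])
  also have "\<dots> \<le> real (card I) * e * exp (- (c * \<delta>))"
    using \<open>e > 0\<close> assms(1) by (intro mult_right_mono) (auto intro: card_mono)
  finally have tail: "r \<le> real (card I) * e * exp (- (c * \<delta>))" .
  have "2 * K * r / Z \<le> 2 * K * r / e"
    using \<open>e \<le> Z\<close> \<open>e > 0\<close> \<open>r \<ge> 0\<close> K by (intro divide_left_mono) auto
  also have "\<dots> \<le> 2 * K * (real (card I) * e * exp (- (c * \<delta>))) / e"
    using tail \<open>e > 0\<close> K by (intro divide_right_mono mult_left_mono) auto
  also have "\<dots> = 2 * K * real (card I) * exp (- (c * \<delta>))"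
    using \<open>e > 0\<close> by simp
  finally show ?thesis
    using weighted_average_near_uniform_average[OF assms(1-3), of "\<lambda>j. exp (c * a j)" e v K]
      top bound \<open>e > 0\<close>
    by (simp add: e_def r_def Z_def)
qed

lemma norm_vector_matrix_mult_le:
  fixes x :: "real^'n" and W :: "real^'m^'n"
  shows "norm (x v* W) \<le> norm x * norm W"
proof -
  have "x v* W = (\<Sum>i\<in>UNIV. x $ i *\<^sub>R W $ i)"
    by (simp add: vec_eq_iff vector_matrix_mult_def mult.commute)
  then have "norm (x v* W) \<le> (\<Sum>i\<in>UNIV. \<bar>x $ i\<bar> * \<bar>norm (W $ i)\<bar>)"
    using norm_sum[of "\<lambda>i. x $ i *\<^sub>R W $ i" UNIV] by simp
  also have "\<dots> \<le> norm x * norm W"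
    using L2_set_mult_ineq[of "\<lambda>i. norm (x $ i)" "\<lambda>i. norm (W $ i)" UNIV]
    by (simp add: norm_vec_def)
  finally show ?thesis .
qed

lemma norm_le_of_components_le:
  fixes x :: "real^'n"
  assumes "\<forall>i. \<bar>x $ i\<bar> \<le> M"
  shows "norm x \<le> real CARD('n) * M"
  using norm_le_l1_cart[of x] sum_mono[of UNIV "\<lambda>i. \<bar>x $ i\<bar>" "\<lambda>_. M"] assms by simp

lemma linf_norm_le_norm: "linf_norm v \<le> norm v"
  unfolding linf_norm_def by (simp add: component_le_norm_cart)

lemma attn_score_scaleR_query:
  "attn_score X (c *\<^sub>R WQ) WK i j = c * attn_score X WQ WK i j"
  by (simp add: attn_score_def vector_scaleR_matrix_ac)

lemma max_set_subset: "max_set X WQ WK i \<subseteq> {1..i}"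
  by (auto simp: max_set_def)

lemma attn_score_max_set:
  "j \<in> max_set X WQ WK i \<Longrightarrow>
     attn_score X WQ WK i j = Max ((\<lambda>k. attn_score X WQ WK i k) ` {1..i})"
  by (simp add: max_set_def)

lemma max_set_nonempty:
  assumes "1 \<le> i"
  shows "max_set X WQ WK i \<noteq> {}"
proof -
  let ?a = "attn_score X WQ WK i"
  have "Max (?a ` {1..i}) \<in> ?a ` {1..i}"
    using assms by (intro Max_in) auto
  then show ?thesis by (force simp: max_set_def)
qed

lemma softmax_attn_scaleR_near_saturated_attn:
  assumes "1 \<le> i"
    and gap: "\<forall>j\<in>max_set X WQ WK i. \<forall>k\<in>{1..i}. k \<notin> max_set X WQ WK i \<longrightarrow>
        attn_score X WQ WK i j - attn_score X WQ WK i k \<ge> \<delta>"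
    and value_bound: "\<forall>j\<in>{1..i}. norm (X j v* WV) \<le> K" and "c \<ge> 0"
  shows "linf_norm (softmax_attn X (c *\<^sub>R WQ) WK WV i - saturated_attn X WQ WK WV i)
           \<le> 2 * K * real i * exp (- (c * \<delta>))"
proof -
  let ?a = "attn_score X WQ WK i" and ?S = "max_set X WQ WK i"
  define m where "m = Max (?a ` {1..i})"
  obtain j0 where j0: "j0 \<in> ?S" using max_set_nonempty[OF \<open>1 \<le> i\<close>] by blast
  have top: "\<forall>j\<in>?S. ?a j = m"
    by (simp add: attn_score_max_set m_def)
  have rest: "\<forall>k\<in>{1..i} - ?S. ?a k \<le> m - \<delta>"
    using gap j0 top by fastforce
  have "norm (softmax_attn X (c *\<^sub>R WQ) WK WV i - saturated_attn X WQ WK WV i)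
          \<le> 2 * K * real (card {1..i}) * exp (- (c * \<delta>))"
    unfolding softmax_attn_def saturated_attn_def attn_score_scaleR_query
    by (rule softmax_average_near_uniform_average[OF _ max_set_subset
          max_set_nonempty[OF \<open>1 \<le> i\<close>] top rest value_bound \<open>c \<ge> 0\<close>]) simp
  then show ?thesis
    using linf_norm_le_norm order_trans by fastforce
qed

definition saturating_scale :: "nat \<Rightarrow> real \<Rightarrow> real \<Rightarrow> real \<Rightarrow> real" where
  "saturating_scale n K \<delta> \<epsilon> = (ln (real n) + max 0 (ln (1 / \<epsilon>)) + 2 * K) / \<delta>"

lemma saturating_scale_nonneg:
  assumes "\<delta> > 0" and "K \<ge> 0"
  shows "saturating_scale n K \<delta> \<epsilon> \<ge> 0"
proof -
  have "ln (real n) \<ge> 0" by (cases n) auto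
  then show ?thesis using assms by (simp add: saturating_scale_def)
qed

lemma saturating_scale_error_le:
  assumes "\<delta> > 0" and "\<epsilon> > 0" and "n \<ge> 1" and "K \<ge> 0"
  shows "2 * K * real n * exp (- (saturating_scale n K \<delta> \<epsilon> * \<delta>)) \<le> \<epsilon>"
proof -
  have "saturating_scale n K \<delta> \<epsilon> * \<delta> = ln (real n) + max 0 (ln (1 / \<epsilon>)) + 2 * K"
    using assms(1) by (simp add: saturating_scale_def)
  moreover have "exp (- ln (real n)) = 1 / real n"
    using assms(3) by (simp add: exp_minus inverse_eq_divide)
  ultimately have "2 * K * real n * exp (- (saturating_scale n K \<delta> \<epsilon> * \<delta>))
          = (2 * K * exp (- (2 * K))) * exp (- max 0 (ln (1 / \<epsilon>)))"
    using assms(3) by (simp only: minus_add_distrib exp_add) (simp add: field_simps)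
  also have "\<dots> \<le> 1 * \<epsilon>"
  proof (rule mult_mono)
    have "2 * K \<le> exp (2 * K)"
      using exp_ge_add_one_self[of "2 * K"] by linarith
    then show "2 * K * exp (- (2 * K)) \<le> 1"
      by (simp add: exp_minus field_simps)
    have "exp (- max 0 (ln (1 / \<epsilon>))) \<le> exp (- ln (1 / \<epsilon>))"
      by simp
    then show "exp (- max 0 (ln (1 / \<epsilon>))) \<le> \<epsilon>"
      using assms(2) by (simp add: ln_div)
  qed (use assms(2) in auto)
  finally show ?thesis by simp
qed

lemma saturating_scale_le_square:
  fixes M B D \<delta> \<epsilon> :: real and n :: nat
  assumes "M \<ge> 0" and "B \<ge> 0" and "D \<ge> 0" and "\<delta> > 0"
  defines "L \<equiv> 1 + M + 1 / \<delta> + ln (real n) + max 0 (ln (1 / \<epsilon>))"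
  shows "saturating_scale n (D * M * B) \<delta> \<epsilon> \<le> (2 + 2 * D * B) * L\<^sup>2"
proof -
  define T where "T = ln (real n) + max 0 (ln (1 / \<epsilon>)) + 2 * (D * M * B)"
  have ln_n: "ln (real n) \<ge> 0" by (cases n) auto
  then have "T \<ge> 0" using assms(1-3) by (simp add: T_def)
  have "1 / \<delta> \<le> L" and "1 \<le> L" and "M \<le> L"
    and "ln (real n) + max 0 (ln (1 / \<epsilon>)) \<le> L"
    using assms(1,4) ln_n by (simp_all add: L_def)
  have "2 * (D * M * B) \<le> 2 * D * B * L"
    using \<open>M \<le> L\<close> assms(2,3) by (simp add: mult_left_mono mult.commute mult.left_commute)
  then have "T \<le> (2 + 2 * D * B) * L"
    using \<open>1 \<le> L\<close> \<open>ln (real n) + max 0 (ln (1 / \<epsilon>)) \<le> L\<close>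
    by (simp add: T_def algebra_simps)
  have "saturating_scale n (D * M * B) \<delta> \<epsilon> = T * (1 / \<delta>)"
    by (simp add: saturating_scale_def T_def)
  also have "\<dots> \<le> ((2 + 2 * D * B) * L) * L"
    using \<open>T \<ge> 0\<close> \<open>\<delta> > 0\<close> \<open>1 / \<delta> \<le> L\<close> \<open>T \<le> (2 + 2 * D * B) * L\<close> \<open>1 \<le> L\<close>
    by (intro mult_mono) auto
  finally show ?thesis by (simp add: power2_eq_square mult.assoc)
qed

lemma softmax_attn_saturating_scale_approx:
  fixes X :: "nat \<Rightarrow> real^'e" and WQ WK :: "real^'k^'e" and WV :: "real^'h^'e"
  assumes inputs: "\<forall>i\<in>{1..n}. \<forall>e. \<bar>X i $ e\<bar> \<le> M"
    and "norm WV \<le> B" and "\<delta> > 0" and "\<epsilon> > 0"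
    and gap: "\<forall>i\<in>{1..n}. \<forall>j\<in>max_set X WQ WK i. \<forall>k\<in>{1..i}. k \<notin> max_set X WQ WK i \<longrightarrow>
        attn_score X WQ WK i j - attn_score X WQ WK i k \<ge> \<delta>"
  defines "K \<equiv> real CARD('e) * M * B"
  shows "\<forall>i\<in>{1..n}. linf_norm (softmax_attn X (saturating_scale n K \<delta> \<epsilon> *\<^sub>R WQ) WK WV i
                                    - saturated_attn X WQ WK WV i) \<le> \<epsilon>"
proof
  fix i assume i: "i \<in> {1..n}"
  let ?c = "saturating_scale n K \<delta> \<epsilon>"
  have "M \<ge> 0" using inputs i by (meson abs_ge_zero order_trans)
  moreover have "B \<ge> 0" using \<open>norm WV \<le> B\<close> norm_ge_zero order_trans by blast
  ultimately have "K \<ge> 0" by (simp add: K_def)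
  have "\<forall>j\<in>{1..i}. norm (X j v* WV) \<le> K"
  proof
    fix j assume "j \<in> {1..i}"
    then have "norm (X j) \<le> real CARD('e) * M"
      using inputs i by (intro norm_le_of_components_le) auto
    then show "norm (X j v* WV) \<le> K"
      unfolding K_def using \<open>norm WV \<le> B\<close> \<open>M \<ge> 0\<close>
      by (meson mult_mono norm_ge_zero norm_vector_matrix_mult_le order_trans)
  qed
  then have "linf_norm (softmax_attn X (?c *\<^sub>R WQ) WK WV i - saturated_attn X WQ WK WV i)
               \<le> 2 * K * real i * exp (- (?c * \<delta>))"
    using i gap saturating_scale_nonneg[OF \<open>\<delta> > 0\<close> \<open>K \<ge> 0\<close>]
    by (intro softmax_attn_scaleR_near_saturated_attn) auto
  also have "\<dots> \<le> 2 * K * real n * exp (- (?c * \<delta>))"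
    using i \<open>K \<ge> 0\<close> by (intro mult_right_mono mult_left_mono) auto
  also have "\<dots> \<le> \<epsilon>"
    using i \<open>K \<ge> 0\<close> \<open>\<delta> > 0\<close> \<open>\<epsilon> > 0\<close> by (intro saturating_scale_error_le) auto
  finally show "linf_norm (softmax_attn X (?c *\<^sub>R WQ) WK WV i - saturated_attn X WQ WK WV i) \<le> \<epsilon>" .
qed

lemma scaled_weight_norm_le_square:
  fixes W :: "'a::real_normed_vector" and n :: nat and B M D \<delta> \<epsilon> :: real
  assumes "norm W \<le> B" and "M \<ge> 0" and "D \<ge> 0" and "\<delta> > 0"
  defines "C \<equiv> (1 + \<bar>B\<bar>) * (2 + 2 * D * \<bar>B\<bar>)"
    and "L \<equiv> 1 + M + 1 / \<delta> + ln (real n) + max 0 (ln (1 / \<epsilon>))"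
  shows "norm W \<le> C * L\<^sup>2" and "norm (saturating_scale n (D * M * B) \<delta> \<epsilon> *\<^sub>R W) \<le> C * L\<^sup>2"
proof -
  have "B \<ge> 0" using assms(1) norm_ge_zero order_trans by blast
  have "ln (real n) \<ge> 0" by (cases n) auto
  then have "1 \<le> L\<^sup>2"
    using assms(2,4) by (simp add: L_def one_le_power)
  have "C \<ge> 0" using assms(3) by (simp add: C_def)
  have "norm W \<le> B" by (fact assms(1))
  also have "\<dots> \<le> C"
    using assms(3) \<open>B \<ge> 0\<close> by (simp add: C_def algebra_simps)
  also have "\<dots> \<le> C * L\<^sup>2"
    using \<open>C \<ge> 0\<close> \<open>1 \<le> L\<^sup>2\<close> by (simp add: mult_le_cancel_left1)
  finally show "norm W \<le> C * L\<^sup>2" .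
  have "norm (saturating_scale n (D * M * B) \<delta> \<epsilon> *\<^sub>R W) \<le> ((2 + 2 * D * B) * L\<^sup>2) * B"
    using saturating_scale_nonneg[of \<delta> "D * M * B"] saturating_scale_le_square[of M B D \<delta> n \<epsilon>]
      assms(1-4) \<open>B \<ge> 0\<close>
    by (simp add: L_def mult_mono)
  also have "\<dots> \<le> C * L\<^sup>2"
    using assms(3) \<open>B \<ge> 0\<close> \<open>1 \<le> L\<^sup>2\<close> by (simp add: C_def algebra_simps)
  finally show "norm (saturating_scale n (D * M * B) \<delta> \<epsilon> *\<^sub>R W) \<le> C * L\<^sup>2" .
qed

theorem mainTheorem4:
  fixes B :: real
  shows "\<exists>(C::real) (p::nat). \<forall>(n::nat) (M::real) (\<delta>::real) (\<epsilon>::real)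
      (X :: nat \<Rightarrow> real^'e) (WQ :: real^'k^'e) (WK :: real^'k^'e) (WV :: real^'h^'e).
    (\<forall>i\<in>{1..n}. \<forall>e. \<bar>X i $ e\<bar> \<le> M) \<longrightarrow>
    norm WQ \<le> B \<longrightarrow> norm WK \<le> B \<longrightarrow> norm WV \<le> B \<longrightarrow>
    \<delta> > 0 \<longrightarrow> \<epsilon> > 0 \<longrightarrow>
    (\<forall>i\<in>{1..n}. \<forall>j\<in>max_set X WQ WK i. \<forall>k\<in>{1..i}. k \<notin> max_set X WQ WK i \<longrightarrow>
        attn_score X WQ WK i j - attn_score X WQ WK i k \<ge> \<delta>) \<longrightarrow>
    (\<exists>(WQ' :: real^'k^'e) (WK' :: real^'k^'e) (WV' :: real^'h^'e).
       (let P = C * (1 + M + 1 / \<delta> + ln (real n) + max 0 (ln (1 / \<epsilon>))) ^ p in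
          norm WQ' \<le> P \<and> norm WK' \<le> P \<and> norm WV' \<le> P) \<and>
       (\<forall>i\<in>{1..n}. linf_norm (softmax_attn X WQ' WK' WV' i - saturated_attn X WQ WK WV i) \<le> \<epsilon>))"
proof (intro exI[of _ "(1 + \<bar>B\<bar>) * (2 + 2 * real CARD('e) * \<bar>B\<bar>)"] exI[of _ "2::nat"]
    allI impI, goal_cases)
  case (1 n M \<delta> \<epsilon> X WQ WK WV)
  note inputs = "1"(1) and WQ = "1"(2) and WK = "1"(3) and WV = "1"(4) and gap = "1"(7)
  show ?case
  proof (cases "n = 0")
    case True
    then show ?thesis by (intro exI[of _ 0]) simp
  next
    case False
    then have "M \<ge> 0"
      using inputs by (meson abs_ge_zero atLeastAtMost_iff le_refl less_one not_le order_trans)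
    note weight_le = scaled_weight_norm_le_square[where n = n and \<epsilon> = \<epsilon>,
        OF _ \<open>M \<ge> 0\<close> of_nat_0_le_iff \<open>\<delta> > 0\<close>]
    show ?thesis
      using weight_le[OF WQ] weight_le[OF WK] weight_le[OF WV]
        softmax_attn_saturating_scale_approx[OF inputs WV \<open>\<delta> > 0\<close> \<open>\<epsilon> > 0\<close> gap]
      by (intro exI[of _ "saturating_scale n (real CARD('e) * M * B) \<delta> \<epsilon> *\<^sub>R WQ"]
          exI[of _ WK] exI[of _ WV]) simp
  qed
qed

end
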